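(* Let $G$ be a connected split graph with no universal vertex. Then the cutset hypergraph of $G$ equals the neighborhood hypergraph of $G$; that is, a set $S\subseteq V(G)$ is a minimal cutset of $G$ if and only if $S$ is an inclusion-wise minimal member of the family $\{N(v):v\in V(G)\}$.
   Context: A graph is split if its vertex set can be partitioned into a clique and an independent set. A universal vertex is a vertex adjacent to all other vertices. $N(v)$ denotes the (open) neighborhood of $v$. A cutset of $G$ is a set $S\subseteq V(G)$ such that $G-S$ is disconnected; it is minimal if it contains no other cutset. The cutset hypergraph of $G$ has vertex set $V(G)$ and hyperedges the minimal cutsets; the neighborhood hypergraph of $G$ has vertex set $V(G)$ and hyperedges the inclusion-wise minimal sets in $\{N(v):v\in V(G)\}$. *)

theory Defs
  imports Main
begin

definition simple_graph :: "'a set \<Rightarrow> ('a \<Rightarrow> 'a \<Rightarrow> bool) \<Rightarrow> bool" where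
  "simple_graph V E \<longleftrightarrow> finite V \<and> (\<forall>u v. E u v \<longrightarrow> u \<in> V \<and> v \<in> V) \<and>
     (\<forall>u v. E u v \<longrightarrow> E v u) \<and> (\<forall>v. \<not> E v v)"

definition nbhd :: "'a set \<Rightarrow> ('a \<Rightarrow> 'a \<Rightarrow> bool) \<Rightarrow> 'a \<Rightarrow> 'a set" where
  "nbhd V E v = {u \<in> V. E v u}"

definition reach_in :: "('a \<Rightarrow> 'a \<Rightarrow> bool) \<Rightarrow> 'a set \<Rightarrow> 'a \<Rightarrow> 'a \<Rightarrow> bool" where
  "reach_in E W u w \<longleftrightarrow> (\<exists>p. p \<noteq> [] \<and> hd p = u \<and> last p = w \<and> set p \<subseteq> W \<and>
      (\<forall>i < length p - 1. E (p ! i) (p ! Suc i)))"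

definition connected_graph :: "'a set \<Rightarrow> ('a \<Rightarrow> 'a \<Rightarrow> bool) \<Rightarrow> bool" where
  "connected_graph V E \<longleftrightarrow> V \<noteq> {} \<and> (\<forall>u\<in>V. \<forall>w\<in>V. reach_in E V u w)"

definition disconnected_graph :: "'a set \<Rightarrow> ('a \<Rightarrow> 'a \<Rightarrow> bool) \<Rightarrow> bool" where
  "disconnected_graph V E \<longleftrightarrow> (\<exists>u\<in>V. \<exists>w\<in>V. \<not> reach_in E V u w)"

definition split_graph :: "'a set \<Rightarrow> ('a \<Rightarrow> 'a \<Rightarrow> bool) \<Rightarrow> bool" where
  "split_graph V E \<longleftrightarrow> (\<exists>K I. K \<union> I = V \<and> K \<inter> I = {} \<and>
      (\<forall>u\<in>K. \<forall>v\<in>K. u \<noteq> v \<longrightarrow> E u v) \<and> (\<forall>u\<in>I. \<forall>v\<in>I. \<not> E u v))"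

definition universal_vertex :: "'a set \<Rightarrow> ('a \<Rightarrow> 'a \<Rightarrow> bool) \<Rightarrow> 'a \<Rightarrow> bool" where
  "universal_vertex V E v \<longleftrightarrow> v \<in> V \<and> (\<forall>u\<in>V. u \<noteq> v \<longrightarrow> E v u)"

definition cutset :: "'a set \<Rightarrow> ('a \<Rightarrow> 'a \<Rightarrow> bool) \<Rightarrow> 'a set \<Rightarrow> bool" where
  "cutset V E S \<longleftrightarrow> S \<subseteq> V \<and> disconnected_graph (V - S) E"

definition minimal_cutset :: "'a set \<Rightarrow> ('a \<Rightarrow> 'a \<Rightarrow> bool) \<Rightarrow> 'a set \<Rightarrow> bool" where
  "minimal_cutset V E S \<longleftrightarrow> cutset V E S \<and> (\<forall>T. T \<subset> S \<longrightarrow> \<not> cutset V E T)"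

definition cutset_hyperedges :: "'a set \<Rightarrow> ('a \<Rightarrow> 'a \<Rightarrow> bool) \<Rightarrow> 'a set set" where
  "cutset_hyperedges V E = {S. minimal_cutset V E S}"

definition nbhd_hyperedges :: "'a set \<Rightarrow> ('a \<Rightarrow> 'a \<Rightarrow> bool) \<Rightarrow> 'a set set" where
  "nbhd_hyperedges V E = {S. S \<in> nbhd V E ` V \<and> (\<forall>T \<in> nbhd V E ` V. \<not> T \<subset> S)}"

end

theory Submission
  imports Defs
begin

text \<open>
  Let \<open>K \<union> I\<close> be a split partition into a clique and an independent set. If every vertex
  of \<open>G - S\<close> keeps a neighbour in \<open>G - S\<close>, then \<open>G - S\<close> is connected: a remaining vertex of
  \<open>I\<close> has all its neighbours in \<open>K\<close>, so every remaining vertex is in \<open>K\<close> or adjacent to a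
  remaining clique vertex, and those are pairwise adjacent. Hence every cutset \<open>S\<close> contains
  \<open>N(x)\<close> for some \<open>x \<notin> S\<close>. Conversely \<open>N(v)\<close> separates \<open>v\<close> from any non-neighbour, so it is
  a cutset when \<open>v\<close> is not universal. A family of sets and a subfamily that lies below every
  member have the same minimal members.
\<close>

lemma minimal_sets_eq_if_cofinal_subfamily:
  assumes "B \<subseteq> A" and cofinal: "\<forall>S\<in>A. \<exists>T\<in>B. T \<subseteq> S"
  shows "{S. S \<in> A \<and> (\<forall>T. T \<subset> S \<longrightarrow> T \<notin> A)} = {S. S \<in> B \<and> (\<forall>T\<in>B. \<not> T \<subset> S)}"
proof (intro set_eqI iffI)
  fix S assume "S \<in> {S. S \<in> A \<and> (\<forall>T. T \<subset> S \<longrightarrow> T \<notin> A)}"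
  then have S: "S \<in> A" "\<forall>T. T \<subset> S \<longrightarrow> T \<notin> A" by simp_all
  then obtain T where "T \<in> B" "T \<subseteq> S" using cofinal by blast
  with S assms(1) have "S = T" by blast
  with S assms(1) \<open>T \<in> B\<close> show "S \<in> {S. S \<in> B \<and> (\<forall>T\<in>B. \<not> T \<subset> S)}" by blast
next
  fix S assume "S \<in> {S. S \<in> B \<and> (\<forall>T\<in>B. \<not> T \<subset> S)}"
  then have S: "S \<in> B" "\<forall>T\<in>B. \<not> T \<subset> S" by simp_all
  have "T \<notin> A" if "T \<subset> S" for T
  proof
    assume "T \<in> A"
    then obtain T' where "T' \<in> B" "T' \<subseteq> T" using cofinal by blast
    with S \<open>T \<subset> S\<close> show False by blast
  qed
  with S assms(1) show "S \<in> {S. S \<in> A \<and> (\<forall>T. T \<subset> S \<longrightarrow> T \<notin> A)}" by blast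
qed

lemma reach_in_refl: "x \<in> W \<Longrightarrow> reach_in E W x x"
  unfolding reach_in_def by (rule exI[of _ "[x]"]) auto

lemma reach_in_Cons:
  assumes "reach_in E W y z" and "E x y" and "x \<in> W"
  shows "reach_in E W x z"
proof -
  obtain p where p: "p \<noteq> []" "hd p = y" "last p = z" "set p \<subseteq> W"
    "\<forall>i < length p - 1. E (p ! i) (p ! Suc i)"
    using assms(1) unfolding reach_in_def by blast
  have "\<forall>i < length (x # p) - 1. E ((x # p) ! i) ((x # p) ! Suc i)"
  proof (intro allI impI)
    fix i assume i: "i < length (x # p) - 1"
    show "E ((x # p) ! i) ((x # p) ! Suc i)"
    proof (cases i)
      case 0
      then show ?thesis using p assms(2) by (cases p) auto
    next
      case (Suc j)
      then show ?thesis using p i by auto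
    qed
  qed
  with p assms(3) show ?thesis
    unfolding reach_in_def by (intro exI[of _ "x # p"]) auto
qed

lemma reach_in_first_step:
  assumes "reach_in E W u w" and "u \<noteq> w"
  shows "\<exists>v\<in>W. E u v"
proof -
  obtain p where p: "p \<noteq> []" "hd p = u" "last p = w" "set p \<subseteq> W"
    "\<forall>i < length p - 1. E (p ! i) (p ! Suc i)"
    using assms(1) unfolding reach_in_def by blast
  obtain q where q: "p = u # q"
    using p by (cases p) auto
  with p assms(2) have "q \<noteq> []" by auto
  with q p have "E u (q ! 0)" and "q ! 0 \<in> W"
    by (auto dest: spec[of _ 0])
  then show ?thesis by blast
qed

lemma split_graph_reach_in_if_no_isolated:
  assumes "simple_graph V E" and "split_graph V E"
    and no_isolated: "\<forall>x\<in>W. \<exists>y\<in>W. E x y"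
    and "u \<in> W" and "w \<in> W"
  shows "reach_in E W u w"
proof -
  obtain K I where KI: "K \<union> I = V" "\<forall>a\<in>K. \<forall>b\<in>K. a \<noteq> b \<longrightarrow> E a b" "\<forall>a\<in>I. \<forall>b\<in>I. \<not> E a b"
    using assms(2) unfolding split_graph_def by blast
  have sym: "E a b \<Longrightarrow> E b a" for a b
    using assms(1) unfolding simple_graph_def by blast
  have edges_in_V: "E a b \<Longrightarrow> a \<in> V" for a b
    using assms(1) unfolding simple_graph_def by blast
  have near_clique: "\<exists>k\<in>K \<inter> W. k = x \<or> E k x" if "x \<in> W" for x
  proof -
    obtain y where y: "y \<in> W" "E x y" using no_isolated \<open>x \<in> W\<close> by blast
    have "x \<in> V" "y \<in> V" using y(2) edges_in_V sym by blast+
    with KI y(2) have "x \<in> K \<or> y \<in> K" by blast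
    then show ?thesis
    proof
      assume "x \<in> K"
      with \<open>x \<in> W\<close> show ?thesis by blast
    next
      assume "y \<in> K"
      with y sym show ?thesis by blast
    qed
  qed
  have reach_from_near: "reach_in E W k z" if "k \<in> W" "k = x \<or> E k x" "reach_in E W x z" for k x z
    using that reach_in_Cons[of E W x z k] by auto
  obtain k1 where k1: "k1 \<in> K \<inter> W" "k1 = u \<or> E k1 u" using near_clique \<open>u \<in> W\<close> by blast
  obtain k2 where k2: "k2 \<in> K \<inter> W" "k2 = w \<or> E k2 w" using near_clique \<open>w \<in> W\<close> by blast
  have "reach_in E W k2 w"
    using reach_from_near k2 reach_in_refl[OF \<open>w \<in> W\<close>] by blast
  moreover have "k1 = k2 \<or> E k1 k2" using k1 k2 KI(2) by blast
  ultimately have "reach_in E W k1 w"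
    using reach_from_near k1 by blast
  moreover have "u = k1 \<or> E u k1" using k1 sym by blast
  ultimately show ?thesis
    using reach_from_near \<open>u \<in> W\<close> by blast
qed

lemma split_graph_cutset_contains_nbhd:
  assumes "simple_graph V E" and "split_graph V E" and "cutset V E S"
  shows "\<exists>x\<in>V - S. nbhd V E x \<subseteq> S"
proof (rule ccontr)
  assume "\<not> ?thesis"
  then have "\<forall>x\<in>V - S. \<exists>y\<in>V - S. E x y"
    unfolding nbhd_def by blast
  then have "\<forall>u\<in>V - S. \<forall>w\<in>V - S. reach_in E (V - S) u w"
    using split_graph_reach_in_if_no_isolated[OF assms(1,2)] by blast
  with assms(3) show False
    unfolding cutset_def disconnected_graph_def by blast
qed

lemma nbhd_cutset:
  assumes "simple_graph V E" and "v \<in> V" and "\<not> universal_vertex V E v"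
  shows "cutset V E (nbhd V E v)"
proof -
  obtain w where w: "w \<in> V" "w \<noteq> v" "\<not> E v w"
    using assms(2,3) unfolding universal_vertex_def by blast
  have "\<not> E v v" using assms(1) unfolding simple_graph_def by blast
  then have "v \<in> V - nbhd V E v" and "w \<in> V - nbhd V E v"
    using assms(2) w unfolding nbhd_def by auto
  moreover have "\<not> reach_in E (V - nbhd V E v) v w"
  proof
    assume "reach_in E (V - nbhd V E v) v w"
    then obtain x where "x \<in> V - nbhd V E v" "E v x"
      using reach_in_first_step w(2) by metis
    then show False unfolding nbhd_def by blast
  qed
  moreover have "nbhd V E v \<subseteq> V" unfolding nbhd_def by blast
  ultimately show ?thesis
    unfolding cutset_def disconnected_graph_def by blast
qed

theorem mainTheorem4:
  fixes V :: "'a set" and E :: "'a \<Rightarrow> 'a \<Rightarrow> bool"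
  assumes "simple_graph V E"
    and "connected_graph V E"
    and "split_graph V E"
    and "\<not> (\<exists>v\<in>V. universal_vertex V E v)"
  shows "cutset_hyperedges V E = nbhd_hyperedges V E"
proof -
  let ?cutsets = "{S. cutset V E S}" and ?nbhds = "nbhd V E ` V"
  have "?nbhds \<subseteq> ?cutsets"
    using assms(4) by (auto intro: nbhd_cutset[OF assms(1)])
  moreover have "\<forall>S\<in>?cutsets. \<exists>T\<in>?nbhds. T \<subseteq> S"
  proof
    fix S assume "S \<in> ?cutsets"
    then obtain x where "x \<in> V - S" and "nbhd V E x \<subseteq> S"
      using split_graph_cutset_contains_nbhd[OF assms(1,3)] by auto
    then show "\<exists>T\<in>?nbhds. T \<subseteq> S" by blast
  qed
  ultimately have "{S. S \<in> ?cutsets \<and> (\<forall>T. T \<subset> S \<longrightarrow> T \<notin> ?cutsets)} = nbhd_hyperedges V E"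
    unfolding nbhd_hyperedges_def by (rule minimal_sets_eq_if_cofinal_subfamily)
  then show ?thesis
    unfolding cutset_hyperedges_def minimal_cutset_def by simp
qed

end
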